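(* Let $\Pi$ be a ground HEX-program, let $\hat{\mathbf{A}}$ be a compatible set of $\Pi$, and let $\mathbf{A}$ be the restriction of $\hat{\mathbf{A}}$ to the non-replacement (ordinary) atoms. Let $U$ be an unfounded set of $\Pi$ with respect to $\mathbf{A}$. If there are no $x,y\in U$ with $x\rightarrow_e y$, then $U$ is an unfounded set of the guessing program $\hat\Pi$ with respect to $\hat{\mathbf{A}}$.
   Context: Ground HEX-programs. A ground ordinary atom is $p(c_1,\dots,c_\ell)$. A ground external atom is $\&g[\vec p](\vec c)$ with input list $\vec p$ (predicate names or constants) and output constants $\vec c$. A ground HEX-program is a finite set of rules $r$: $a_1\lor\dots\lor a_k\leftarrow b_1,\dots,b_m,\mathrm{not}\,b_{m+1},\dots,\mathrm{not}\,b_n$, with ordinary ground head atoms and each $b_j$ an ordinary or external ground atom; $H(r)$, $B^+(r)=\{b_1,\dots,b_m\}$, $B^-(r)=\{b_{m+1},\dots,b_n\}$, $B(r)$ the set of body literals. Interpretations: complete consistent sets $\mathbf{A}$ of signed literals $\mathbf{T}a$/$\mathbf{F}a$. $\mathbf{A}\models a$ (ordinary) iff $\mathbf{T}a\in\mathbf{A}$; $\mathbf{A}\models\&g[\vec p](\vec c)$ iff the Boolean oracle $f_{\&g}(\mathbf{A},\vec p,\vec c)=1$, whose value depends only on the extensions in $\mathbf{A}$ of the input predicates in $\vec p$; $\mathbf{A}\models\mathrm{not}\,b$ iff $\mathbf{A}\not\models b$. Unfounded sets: for a set $X$ of ordinary ground atoms appearing in a program $P$, $\mathbf{A}\,\dot\cup\neg.\,X=(\mathbf{A}\setminus\{\mathbf{T}a\mid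 a\in X\})\cup\{\mathbf{F}a\mid a\in X\}$; $X$ is an unfounded set of $P$ w.r.t. $\mathbf{A}$ iff for every $r\in P$ with $H(r)\cap X\neq\emptyset$: (i) some literal of $B(r)$ is false w.r.t. $\mathbf{A}$, or (ii) some literal of $B(r)$ is false w.r.t. $\mathbf{A}\,\dot\cup\neg.\,X$, or (iii) some atom of $H(r)\setminus X$ is true w.r.t. $\mathbf{A}$. Guessing program and compatible sets: $\hat\Pi$ is obtained from $\Pi$ by replacing each external atom $\&g[\vec p](\vec c)$ by a new ordinary replacement atom $e_{\&g[\vec p]}(\vec c)$ and adding the rule $e_{\&g[\vec p]}(\vec c)\lor ne_{\&g[\vec p]}(\vec c)\leftarrow$. A compatible set of $\Pi$ is an interpretation $\hat{\mathbf{A}}$ that is a (Gelfond–Lifschitz) answer set of $\hat\Pi$ such that $f_{\&g}(\hat{\mathbf{A}},\vec p,\vec c)=1$ iff $\mathbf{T}e_{\&g[\vec p]}(\vec c)\in\hat{\mathbf{A}}$ for all external atoms $\&g[\vec p](\vec c)$ of $\Pi$. Dependencies: $x\rightarrow_e y$ iff some $r\in\Pi$ has $x\in H(r)$ and an external atom $\&g[q_1,\dots,q_n](\vec e)\in B^+(r)\cup B^-(r)$ with some $q_i$ equal to the predicate of $y$. *)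

theory Defs
  imports Main
begin

datatype ('p, 'c) input = PredIn 'p | ConstIn 'c

datatype ('p, 'c) atom = Atom (pred: 'p) "'c list"

datatype ('p, 'c, 'g) batom =
    Ord "('p, 'c) atom"
  | Ext 'g "('p, 'c) input list" "'c list"

datatype ('p, 'c, 'g) rule =
  Rule (H: "('p, 'c) atom set") (Bpos: "('p, 'c, 'g) batom set") (Bneg: "('p, 'c, 'g) batom set")

type_synonym ('p, 'c, 'g) program = "('p, 'c, 'g) rule set"

definition ground_program :: "('p, 'c, 'g) program \<Rightarrow> bool" where
  "ground_program P \<longleftrightarrow> finite P \<and>
     (\<forall>r\<in>P. finite (H r) \<and> finite (Bpos r) \<and> finite (Bneg r))"

text \<open>Interpretations are represented by the set of ordinary atoms that are true
  (all others are false); this is a complete consistent set of signed literals.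
  Boolean evaluation functions: f g A ps cs.\<close>
type_synonym ('p, 'c, 'g) extfun =
  "'g \<Rightarrow> ('p, 'c) atom set \<Rightarrow> ('p, 'c) input list \<Rightarrow> 'c list \<Rightarrow> bool"

definition ext_of_pred :: "('p, 'c) atom set \<Rightarrow> 'p \<Rightarrow> 'c list set" where
  "ext_of_pred A p = {cs. Atom p cs \<in> A}"

definition extfun_ok :: "('p, 'c, 'g) extfun \<Rightarrow> bool" where
  "extfun_ok f \<longleftrightarrow> (\<forall>g ps cs A B.
     (\<forall>q. PredIn q \<in> set ps \<longrightarrow> ext_of_pred A q = ext_of_pred B q) \<longrightarrow>
     f g A ps cs = f g B ps cs)"

fun sat :: "('p, 'c, 'g) extfun \<Rightarrow> ('p, 'c) atom set \<Rightarrow> ('p, 'c, 'g) batom \<Rightarrow> bool" where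
  "sat f A (Ord a) = (a \<in> A)"
| "sat f A (Ext g ps cs) = f g A ps cs"

definition body_false :: "('p, 'c, 'g) extfun \<Rightarrow> ('p, 'c) atom set \<Rightarrow> ('p, 'c, 'g) rule \<Rightarrow> bool" where
  "body_false f A r \<longleftrightarrow> (\<exists>b\<in>Bpos r. \<not> sat f A b) \<or> (\<exists>b\<in>Bneg r. sat f A b)"

definition ord_atoms_of_body :: "('p, 'c, 'g) batom set \<Rightarrow> ('p, 'c) atom set" where
  "ord_atoms_of_body S = {a. Ord a \<in> S}"

definition atoms_of :: "('p, 'c, 'g) program \<Rightarrow> ('p, 'c) atom set" where
  "atoms_of P = (\<Union>r\<in>P. H r \<union> ord_atoms_of_body (Bpos r) \<union> ord_atoms_of_body (Bneg r))"

text \<open>Unfounded sets; A with X made false is A - X.\<close>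
definition unfounded :: "('p, 'c, 'g) extfun \<Rightarrow> ('p, 'c, 'g) program \<Rightarrow> ('p, 'c) atom set
    \<Rightarrow> ('p, 'c) atom set \<Rightarrow> bool" where
  "unfounded f P A X \<longleftrightarrow> X \<subseteq> atoms_of P \<and>
     (\<forall>r\<in>P. H r \<inter> X \<noteq> {} \<longrightarrow>
        body_false f A r \<or> body_false f (A - X) r \<or> (\<exists>a\<in>H r - X. a \<in> A))"

definition is_model :: "('p, 'c, 'g) extfun \<Rightarrow> ('p, 'c) atom set \<Rightarrow> ('p, 'c, 'g) program \<Rightarrow> bool" where
  "is_model f M P \<longleftrightarrow> (\<forall>r\<in>P. \<not> body_false f M r \<longrightarrow> (\<exists>a\<in>H r. a \<in> M))"

definition gl_reduct :: "('p, 'c, 'g) extfun \<Rightarrow> ('p, 'c) atom set \<Rightarrow> ('p, 'c, 'g) program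
    \<Rightarrow> ('p, 'c, 'g) program" where
  "gl_reduct f A P = {Rule (H r) (Bpos r) {} | r. r \<in> P \<and> (\<forall>b\<in>Bneg r. \<not> sat f A b)}"

definition gl_answer_set :: "('p, 'c, 'g) extfun \<Rightarrow> ('p, 'c) atom set \<Rightarrow> ('p, 'c, 'g) program \<Rightarrow> bool" where
  "gl_answer_set f A P \<longleftrightarrow> is_model f A (gl_reduct f A P) \<and>
     (\<forall>M. M \<subseteq> A \<longrightarrow> is_model f M (gl_reduct f A P) \<longrightarrow> M = A)"

text \<open>Predicates of the guessing program: original ones, plus replacement predicates
  e_{g[ps]} and ne_{g[ps]}.\<close>
datatype ('p, 'c, 'g) hpred =
    OrigP 'p
  | EP 'g "('p, 'c) input list"
  | NEP 'g "('p, 'c) input list"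

type_synonym ('p, 'c, 'g) hatom = "(('p, 'c, 'g) hpred, 'c) atom"
type_synonym ('p, 'c, 'g) hprogram = "(('p, 'c, 'g) hpred, 'c, 'g) program"

fun lift_atom :: "('p, 'c) atom \<Rightarrow> ('p, 'c, 'g) hatom" where
  "lift_atom (Atom p cs) = Atom (OrigP p) cs"

fun lift_batom :: "('p, 'c, 'g) batom \<Rightarrow> (('p, 'c, 'g) hpred, 'c, 'g) batom" where
  "lift_batom (Ord a) = Ord (lift_atom a)"
| "lift_batom (Ext g ps cs) = Ord (Atom (EP g ps) cs)"

definition lift_rule :: "('p, 'c, 'g) rule \<Rightarrow> (('p, 'c, 'g) hpred, 'c, 'g) rule" where
  "lift_rule r = Rule (lift_atom ` H r) (lift_batom ` Bpos r) (lift_batom ` Bneg r)"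

definition ext_atoms :: "('p, 'c, 'g) program \<Rightarrow> ('g \<times> ('p, 'c) input list \<times> 'c list) set" where
  "ext_atoms P = {(g, ps, cs). \<exists>r\<in>P. Ext g ps cs \<in> Bpos r \<union> Bneg r}"

definition guess_rule :: "'g \<Rightarrow> ('p, 'c) input list \<Rightarrow> 'c list \<Rightarrow> (('p, 'c, 'g) hpred, 'c, 'g) rule" where
  "guess_rule g ps cs = Rule {Atom (EP g ps) cs, Atom (NEP g ps) cs} {} {}"

definition guessing_program :: "('p, 'c, 'g) program \<Rightarrow> ('p, 'c, 'g) hprogram" where
  "guessing_program P = lift_rule ` P \<union> (\<lambda>(g, ps, cs). guess_rule g ps cs) ` ext_atoms P"

text \<open>The guessing program contains no external atoms, so the extfun used to
  evaluate it is irrelevant; we fix the constantly false one.\<close>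
definition no_extfun :: "(('p, 'c, 'g) hpred, 'c, 'g) extfun" where
  "no_extfun = (\<lambda>_ _ _ _. False)"

definition restrict_orig :: "('p, 'c, 'g) hatom set \<Rightarrow> ('p, 'c) atom set" where
  "restrict_orig Ah = {a. lift_atom a \<in> Ah}"

text \<open>The extfun is evaluated on the restriction of Ah to original
  atoms; since evaluation functions only depend on the extensions of (original) input predicates,
  this is the same as evaluating on Ah.\<close>
definition compatible_set :: "('p, 'c, 'g) extfun \<Rightarrow> ('p, 'c, 'g) program \<Rightarrow> ('p, 'c, 'g) hatom set \<Rightarrow> bool" where
  "compatible_set f P Ah \<longleftrightarrow> gl_answer_set no_extfun Ah (guessing_program P) \<and>
     (\<forall>(g, ps, cs) \<in> ext_atoms P. f g (restrict_orig Ah) ps cs \<longleftrightarrow> Atom (EP g ps) cs \<in> Ah)"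

definition ext_dep :: "('p, 'c, 'g) program \<Rightarrow> ('p, 'c) atom \<Rightarrow> ('p, 'c) atom \<Rightarrow> bool" where
  "ext_dep P x y \<longleftrightarrow> (\<exists>r\<in>P. x \<in> H r \<and>
     (\<exists>g ps es. Ext g ps es \<in> Bpos r \<union> Bneg r \<and> PredIn (pred y) \<in> set ps))"

end

theory Submission
  imports Defs
begin

text \<open>Every rule of the guessing program is either a guess rule, whose head consists of
  replacement atoms only, or the lifting of a rule r of \<Pi>. For the latter, the lifted body
  evaluates under Ah exactly as the body of r under A, by compatibility. Removing the
  lifted U from Ah removes U from A and leaves the replacement atoms untouched; these still
  reflect the external atoms of r under A - U, because if the head of r meets U then no
  input predicate of an external atom of r is the predicate of an atom of U, so the oracles
  cannot see the difference between A and A - U. Hence each of the three unfoundedness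
  conditions for r transfers to its lifting.\<close>

lemma lift_atom_inject [simp]: "lift_atom a = lift_atom b \<longleftrightarrow> a = b"
  by (cases a; cases b) auto

lemma lift_atom_neq_replacement_atom [simp]:
  "lift_atom a \<noteq> Atom (EP g ps) cs"
  "lift_atom a \<noteq> Atom (NEP g ps) cs"
  by (cases a; simp)+

lemma replacement_atoms_notin_lift [simp]:
  "Atom (EP g ps) cs \<notin> lift_atom ` U"
  "Atom (NEP g ps) cs \<notin> lift_atom ` U"
  by (metis image_iff lift_atom_neq_replacement_atom)+

lemma lift_atoms_of_subset:
  fixes P :: "('p, 'c, 'g) program"
  shows "(lift_atom ` atoms_of P :: ('p, 'c, 'g) hatom set) \<subseteq> atoms_of (guessing_program P)"
proof
  fix x :: "('p, 'c, 'g) hatom" assume "x \<in> lift_atom ` atoms_of P"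
  then obtain a r where a: "x = lift_atom a" and r: "r \<in> P"
    and "a \<in> H r \<union> ord_atoms_of_body (Bpos r) \<union> ord_atoms_of_body (Bneg r)"
    unfolding atoms_of_def by blast
  then have "x \<in> H (lift_rule r) \<union> ord_atoms_of_body (Bpos (lift_rule r))
      \<union> ord_atoms_of_body (Bneg (lift_rule r))"
    unfolding lift_rule_def ord_atoms_of_body_def by (force intro: image_eqI[where x = "Ord a"])
  moreover have "lift_rule r \<in> guessing_program P"
    using r unfolding guessing_program_def by blast
  ultimately show "x \<in> atoms_of (guessing_program P)"
    unfolding atoms_of_def by blast
qed

lemma body_false_lift_rule:
  assumes "\<And>b. b \<in> Bpos r \<union> Bneg r \<Longrightarrow> sat f' A' (lift_batom b) = sat f A b"
  shows "body_false f' A' (lift_rule r) \<longleftrightarrow> body_false f A r"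
  using assms unfolding body_false_def lift_rule_def by auto

lemma extfun_ok_diff:
  assumes "extfun_ok f" and "\<And>y. y \<in> U \<Longrightarrow> PredIn (pred y) \<notin> set ps"
  shows "f g (A - U) ps cs = f g A ps cs"
proof -
  have "ext_of_pred (A - U) q = ext_of_pred A q" if "PredIn q \<in> set ps" for q
    using that assms(2) unfolding ext_of_pred_def by fastforce
  then show ?thesis
    using assms(1) unfolding extfun_ok_def by blast
qed

lemma compatible_set_ext_atom:
  assumes "compatible_set f P Ah" and "r \<in> P" and "Ext g ps cs \<in> Bpos r \<union> Bneg r"
  shows "f g (restrict_orig Ah) ps cs \<longleftrightarrow> Atom (EP g ps) cs \<in> Ah"
proof -
  have "(g, ps, cs) \<in> ext_atoms P"
    using assms(2,3) unfolding ext_atoms_def by blast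
  then show ?thesis
    using assms(1) unfolding compatible_set_def by fast
qed

lemma sat_lift_batom_compatible:
  assumes "compatible_set f P Ah" and "r \<in> P" and "b \<in> Bpos r \<union> Bneg r"
  shows "sat no_extfun Ah (lift_batom b) = sat f (restrict_orig Ah) b"
  using assms compatible_set_ext_atom[OF assms(1,2)]
  by (cases b) (auto simp: restrict_orig_def)

lemma sat_lift_batom_compatible_diff:
  assumes "extfun_ok f" and "compatible_set f P Ah" and "r \<in> P" and "b \<in> Bpos r \<union> Bneg r"
    and "x \<in> H r" and "\<And>y. y \<in> U \<Longrightarrow> \<not> ext_dep P x y"
  shows "sat no_extfun (Ah - lift_atom ` U) (lift_batom b) = sat f (restrict_orig Ah - U) b"
proof (cases b)
  case (Ord a)
  then show ?thesis
    by (auto simp: restrict_orig_def)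
next
  case (Ext g ps cs)
  have "PredIn (pred y) \<notin> set ps" if "y \<in> U" for y
    using assms(3-6) that Ext unfolding ext_dep_def by blast
  then have "f g (restrict_orig Ah - U) ps cs = f g (restrict_orig Ah) ps cs"
    using extfun_ok_diff[OF assms(1)] by blast
  with Ext show ?thesis
    using compatible_set_ext_atom[OF assms(2,3)] assms(4) by simp
qed

theorem lemma2:
  fixes f :: "('p, 'c, 'g) extfun"
    and \<Pi> :: "('p, 'c, 'g) program"
    and Ah :: "('p, 'c, 'g) hatom set"
    and U :: "('p, 'c) atom set"
  assumes "ground_program \<Pi>"
    and "extfun_ok f"
    and "compatible_set f \<Pi> Ah"
    and "unfounded f \<Pi> (restrict_orig Ah) U"
    and "\<not> (\<exists>x\<in>U. \<exists>y\<in>U. ext_dep \<Pi> x y)"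
  shows "unfounded no_extfun (guessing_program \<Pi>) Ah (lift_atom ` U)"
  unfolding unfounded_def
proof (intro conjI ballI impI)
  show "lift_atom ` U \<subseteq> atoms_of (guessing_program \<Pi>)"
    using assms(4) lift_atoms_of_subset unfolding unfounded_def by blast
next
  fix r' assume "r' \<in> guessing_program \<Pi>" and head: "H r' \<inter> lift_atom ` U \<noteq> {}"
  then obtain r where r: "r \<in> \<Pi>" and r': "r' = lift_rule r"
    unfolding guessing_program_def guess_rule_def by auto
  then obtain x where x: "x \<in> H r" "x \<in> U"
    using head unfolding lift_rule_def by auto
  have "body_false f (restrict_orig Ah) r \<or> body_false f (restrict_orig Ah - U) r
      \<or> (\<exists>a\<in>H r - U. a \<in> restrict_orig Ah)"
    using assms(4) r x unfolding unfounded_def by blast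
  moreover have "body_false no_extfun Ah r' \<longleftrightarrow> body_false f (restrict_orig Ah) r"
    unfolding r' using sat_lift_batom_compatible[OF assms(3) r] by (rule body_false_lift_rule)
  moreover have "body_false no_extfun (Ah - lift_atom ` U) r'
      \<longleftrightarrow> body_false f (restrict_orig Ah - U) r"
    unfolding r' using sat_lift_batom_compatible_diff[OF assms(2,3) r _ x(1)] assms(5) x(2)
    by (intro body_false_lift_rule) blast
  ultimately show "body_false no_extfun Ah r' \<or> body_false no_extfun (Ah - lift_atom ` U) r'
      \<or> (\<exists>a\<in>H r' - lift_atom ` U. a \<in> Ah)"
    unfolding r' lift_rule_def restrict_orig_def by auto
qed

end
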